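(* Let $V$ ($|V|>1$) index a discrete memoryless multiple source with entropy function $H$, and let $R_{\mathrm{CO}}$, $\hat f_{R_{\mathrm{CO}}}$, the fundamental partition $\mathcal{P}^*$ (with $|\mathcal{P}^*|\ge 2$), the core $\mathscr{R}^*_{\mathrm{CO}}(V)$ and the subgame cores $\mathscr{R}^*_{\mathrm{CO}}(C)$, $C\in\mathcal{P}^*$, be as in the context. Let $w_V\in\mathbb{R}_{>0}^{|V|}$, $K=|\mathcal{P}^*|-1$ and $\mathbb{Q}_K=\{z/K:z\in\mathbb{Z}\}$. Let $r^E_V$ be either (a) the egalitarian solution, i.e. the minimizer of $\min\{\sum_{i\in V}r_i^2/w_i: r_V\in\mathscr{R}^*_{\mathrm{CO}}(V)\}$, or (b) the fractional egalitarian solution, i.e. the minimizer of $\min\{\sum_{i\in V}r_i^2/w_i: r_V\in\mathscr{R}^*_{\mathrm{CO}}(V)\cap\mathbb{Q}_K^{|V|}\}$. Then $$r^E_V=\bigoplus_{C\in\mathcal{P}^*} r^E_C,$$ where, for each $C\in\mathcal{P}^*$, $r^E_C$ is, in case (a), the minimizer of $\min\{\sum_{i\in C}r_i^2/w_i: r_C\in\mathscr{R}^*_{\mathrm{CO}}(C)\}$ and, in case (b), the minimizer of $\min\{\sum_{i\in C}r_i^2/w_i: r_C\in\mathscr{R}^*_{\mathrm{CO}}(C)\cap\mathbb{Q}_K^{|C|}\}$ (the egalitarian, respectively fractional egalitarian, solution of the subgame on $C$).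
   Context: Write $r(X)=\sum_{i\in X}r_i$ and $H(X\mid Y)=H(X\cup Y)-H(Y)$, where $H(X)$ is the entropy of $(Z_i:i\in X)$. The achievable region is $\mathscr{R}(V)=\{r_V\in\mathbb{R}^{|V|}: r(X)\ge H(X\mid V\setminus X)\ \forall X\subsetneq V\}$ and $R_{\mathrm{CO}}=\min\{r(V):r_V\in\mathscr{R}(V)\}$. For $\alpha\in\mathbb{R}$, $f_\alpha(\emptyset)=0$, $f_\alpha(X)=\alpha-H(V\setminus X\mid X)$ for $X\ne\emptyset$, and the Dilworth truncation is $\hat f_\alpha(X)=\min_{\mathcal{P}\in\Pi(X)}\sum_{C\in\mathcal{P}}f_\alpha(C)$ with $\Pi(X)$ the set of partitions of $X$. The fundamental partition $\mathcal{P}^*$ is the finest partition of $V$ attaining $\hat f_{R_{\mathrm{CO}}}(V)$. The core is $\mathscr{R}^*_{\mathrm{CO}}(V)=\{r_V\in\mathscr{R}(V): r(V)=R_{\mathrm{CO}}\}$, and for $C\subseteq V$, $\mathscr{R}^*_{\mathrm{CO}}(C)=\{r_C\in\mathbb{R}^{|C|}: r(X)\le\hat f_{R_{\mathrm{CO}}}(X)\ \forall X\subseteq C,\ r(C)=\hat f_{R_{\mathrm{CO}}}(C)\}$. The direct sum $\bigoplus_{C}r_C$ over a partition is the vector on $V$ whose $C$-coordinates are those of $r_C$. *)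

theory Defs
  imports Complex_Main "HOL-Library.FuncSet"
begin

text \<open>A source on the index set V: a joint probability mass function p on the
  (finitely many) outcome vectors x in PiE V (\<lambda>_. UNIV), over a finite alphabet 'a.\<close>

definition is_joint_pmf :: "'i set \<Rightarrow> (('i \<Rightarrow> 'a::finite) \<Rightarrow> real) \<Rightarrow> bool" where
  "is_joint_pmf V p \<longleftrightarrow> (\<forall>x\<in>PiE V (\<lambda>_. UNIV). p x \<ge> 0) \<and> (\<Sum>x\<in>PiE V (\<lambda>_. UNIV). p x) = 1"

definition marginal :: "'i set \<Rightarrow> (('i \<Rightarrow> 'a::finite) \<Rightarrow> real) \<Rightarrow> 'i set \<Rightarrow> ('i \<Rightarrow> 'a) \<Rightarrow> real" where
  "marginal V p X z = (\<Sum>x\<in>{x\<in>PiE V (\<lambda>_. UNIV). restrict x X = z}. p x)"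

definition entropy_fun :: "'i set \<Rightarrow> (('i \<Rightarrow> 'a::finite) \<Rightarrow> real) \<Rightarrow> 'i set \<Rightarrow> real" where
  "entropy_fun V p X = - (\<Sum>z\<in>PiE X (\<lambda>_. UNIV).
      (let q = marginal V p X z in if q = 0 then 0 else q * log 2 q))"

definition condH :: "('i set \<Rightarrow> real) \<Rightarrow> 'i set \<Rightarrow> 'i set \<Rightarrow> real" where
  "condH H X Y = H (X \<union> Y) - H Y"

text \<open>Vectors r_V in R^|V| are functions extensional on V.\<close>
definition CO_region :: "('i set \<Rightarrow> real) \<Rightarrow> 'i set \<Rightarrow> ('i \<Rightarrow> real) set" where
  "CO_region H V = {r. r \<in> extensional V \<and> (\<forall>X. X \<subset> V \<longrightarrow> sum r X \<ge> condH H X (V - X))}"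

definition R_CO :: "('i set \<Rightarrow> real) \<Rightarrow> 'i set \<Rightarrow> real" where
  "R_CO H V = (INF r\<in>CO_region H V. sum r V)"

definition f_alpha :: "('i set \<Rightarrow> real) \<Rightarrow> 'i set \<Rightarrow> real \<Rightarrow> 'i set \<Rightarrow> real" where
  "f_alpha H V \<alpha> X = (if X = {} then 0 else \<alpha> - condH H (V - X) X)"

definition is_partition :: "'i set set \<Rightarrow> 'i set \<Rightarrow> bool" where
  "is_partition P X \<longleftrightarrow> \<Union>P = X \<and> (\<forall>C\<in>P. C \<noteq> {}) \<and>
      (\<forall>C\<in>P. \<forall>D\<in>P. C \<noteq> D \<longrightarrow> C \<inter> D = {})"

definition dilworth :: "('i set \<Rightarrow> real) \<Rightarrow> 'i set \<Rightarrow> real \<Rightarrow> 'i set \<Rightarrow> real" where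
  "dilworth H V \<alpha> X = Min ((\<lambda>P. \<Sum>C\<in>P. f_alpha H V \<alpha> C) ` {P. is_partition P X})"

definition fundamental_partition :: "('i set \<Rightarrow> real) \<Rightarrow> 'i set \<Rightarrow> 'i set set \<Rightarrow> bool" where
  "fundamental_partition H V P \<longleftrightarrow>
     is_partition P V \<and> (\<Sum>C\<in>P. f_alpha H V (R_CO H V) C) = dilworth H V (R_CO H V) V \<and>
     (\<forall>Q. is_partition Q V \<and> (\<Sum>C\<in>Q. f_alpha H V (R_CO H V) C) = dilworth H V (R_CO H V) V
          \<longrightarrow> (\<forall>C\<in>P. \<exists>D\<in>Q. C \<subseteq> D))"

definition CO_core :: "('i set \<Rightarrow> real) \<Rightarrow> 'i set \<Rightarrow> ('i \<Rightarrow> real) set" where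
  "CO_core H V = {r \<in> CO_region H V. sum r V = R_CO H V}"

definition CO_subcore :: "('i set \<Rightarrow> real) \<Rightarrow> 'i set \<Rightarrow> 'i set \<Rightarrow> ('i \<Rightarrow> real) set" where
  "CO_subcore H V C = {r. r \<in> extensional C \<and>
      (\<forall>X. X \<subseteq> C \<longrightarrow> sum r X \<le> dilworth H V (R_CO H V) X) \<and>
      sum r C = dilworth H V (R_CO H V) C}"

definition weighted_sq :: "('i \<Rightarrow> real) \<Rightarrow> 'i set \<Rightarrow> ('i \<Rightarrow> real) \<Rightarrow> real" where
  "weighted_sq w S r = (\<Sum>i\<in>S. (r i)^2 / w i)"

definition is_minimizer :: "(('i \<Rightarrow> real) \<Rightarrow> real) \<Rightarrow> ('i \<Rightarrow> real) set \<Rightarrow> ('i \<Rightarrow> real) \<Rightarrow> bool" where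
  "is_minimizer obj S r \<longleftrightarrow> r \<in> S \<and> (\<forall>s\<in>S. obj r \<le> obj s)"

definition QK_vectors :: "nat \<Rightarrow> 'i set \<Rightarrow> ('i \<Rightarrow> real) set" where
  "QK_vectors K S = {r. \<forall>i\<in>S. \<exists>z::int. r i = real_of_int z / real K}"

definition direct_sum :: "'i set set \<Rightarrow> ('i set \<Rightarrow> 'i \<Rightarrow> real) \<Rightarrow> 'i \<Rightarrow> real" where
  "direct_sum P rC = (\<lambda>i. if \<exists>C\<in>P. i \<in> C then rC (THE C. C \<in> P \<and> i \<in> C) i else undefined)"

end

theory Submission
  imports Defs
begin

text \<open>Entropy is nonnegative and submodular (Gibbs: ln t \<le> t - 1 applied to
  p_A p_B / (p_{A\<union>B} p_{A\<inter>B}), whose expectation is at most 1). For such H the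
  Dilworth truncation at V equals R_CO, so the core consists of the r with r(V) = R_CO
  and r(Y) \<le> f(Y) for all nonempty Y. Optimality of P gives two facts: the truncation
  of a block C is f(C), and for nonempty Y the traces Y \<inter> C satisfy
  \<Sum> f(Y \<inter> C) \<le> f(Y). Together they show that the core is the direct sum of the
  subgame cores, and so is its intersection with the grid of multiples of 1/K.
  As the objective is a sum over the blocks, a point of a direct sum minimises it
  iff every component does.\<close>

lemma restrict_eq_subset: "restrict y A = restrict x A \<Longrightarrow> I \<subseteq> A \<Longrightarrow> restrict y I = restrict x I"
  by (auto simp: fun_eq_iff restrict_def) (metis subsetD)

lemma restrict_eq_Un:
  "restrict x A = restrict z A \<Longrightarrow> restrict x B = restrict z B \<Longrightarrow> restrict x (A \<union> B) = restrict z (A \<union> B)"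
  by (simp add: fun_eq_iff restrict_def) metis

lemma log2_ratio_le:
  assumes "a > 0" "b > 0" "c > 0" "d > 0"
  shows "log 2 a + log 2 b - log 2 c - log 2 d \<le> (a * b / (c * d) - 1) / ln 2"
proof -
  have "log 2 a + log 2 b - log 2 c - log 2 d = ln (a * b / (c * d)) / ln 2"
    using assms by (simp add: log_def ln_mult ln_div diff_divide_distrib add_divide_distrib)
  also have "\<dots> \<le> (a * b / (c * d) - 1) / ln 2"
    using assms by (intro divide_right_mono ln_le_minus_one) auto
  finally show ?thesis .
qed

locale joint_source =
  fixes V :: "'i set" and p :: "('i \<Rightarrow> 'a::finite) \<Rightarrow> real"
  assumes finite: "finite V" and pmf: "is_joint_pmf V p"
begin

abbreviation "\<Omega> \<equiv> PiE V (\<lambda>_. UNIV :: 'a set)"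

definition "marg S x = marginal V p S (restrict x S)"

lemma finite_outcomes: "finite \<Omega>"
  using finite by (auto intro: finite_PiE)

lemma pmf_nonneg: "x \<in> \<Omega> \<Longrightarrow> p x \<ge> 0"
  using pmf by (auto simp: is_joint_pmf_def)

lemma sum_pmf: "sum p \<Omega> = 1"
  using pmf by (auto simp: is_joint_pmf_def)

lemma sum_pmf_pos: "(\<Sum>x\<in>{x\<in>\<Omega>. p x > 0}. p x) = 1"
  using sum_pmf finite_outcomes pmf_nonneg
  by (subst sum.mono_neutral_left[of \<Omega>]) (auto simp: less_le)

lemma marg_eq_sum: "marg S x = (\<Sum>y\<in>{y\<in>\<Omega>. restrict y S = restrict x S}. p y)"
  by (simp add: marg_def marginal_def)

lemma marg_eq_sum_if: "marg S x = (\<Sum>y\<in>\<Omega>. if restrict y S = restrict x S then p y else 0)"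
  unfolding marg_eq_sum by (simp add: sum.inter_filter[OF finite_outcomes])

lemma marg_cong: "restrict x S = restrict y S \<Longrightarrow> marg S x = marg S y"
  by (simp add: marg_def)

lemma marg_nonneg: "marg S x \<ge> 0"
  unfolding marg_eq_sum by (rule sum_nonneg) (auto simp: pmf_nonneg)

lemma pmf_le_marg: "x \<in> \<Omega> \<Longrightarrow> p x \<le> marg S x"
  unfolding marg_eq_sum by (rule member_le_sum) (auto simp: finite_outcomes pmf_nonneg)

lemma marg_pos: "x \<in> \<Omega> \<Longrightarrow> p x > 0 \<Longrightarrow> marg S x > 0"
  using pmf_le_marg[of x S] by simp

lemma marg_le_1: "marg S x \<le> 1"
  using sum_mono2[OF finite_outcomes, of "{y\<in>\<Omega>. restrict y S = restrict x S}" p]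
  by (simp add: marg_eq_sum sum_pmf pmf_nonneg)

lemma entropy_fun_eq_sum:
  assumes "S \<subseteq> V"
  shows "entropy_fun V p S = - (\<Sum>x\<in>\<Omega>. p x * log 2 (marg S x))"
proof -
  have "(\<Sum>z\<in>PiE S (\<lambda>_. UNIV). (let q = marginal V p S z in if q = 0 then 0 else q * log 2 q))
      = (\<Sum>z\<in>PiE S (\<lambda>_. UNIV). marginal V p S z * log 2 (marginal V p S z))"
    by (intro sum.cong) (auto simp: Let_def)
  also have "\<dots> = (\<Sum>z\<in>PiE S (\<lambda>_. UNIV). \<Sum>x\<in>{x\<in>\<Omega>. restrict x S = z}. p x * log 2 (marg S x))"
    by (intro sum.cong) (auto simp: marginal_def sum_distrib_right marg_def intro!: sum.cong)
  also have "\<dots> = (\<Sum>x\<in>\<Omega>. p x * log 2 (marg S x))"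
    using assms finite finite_subset
    by (intro sum.group) (auto simp: finite_outcomes intro!: finite_PiE)
  finally show ?thesis unfolding entropy_fun_def by simp
qed

lemma entropy_fun_nonneg:
  assumes "S \<subseteq> V"
  shows "entropy_fun V p S \<ge> 0"
proof -
  have "p x * log 2 (marg S x) \<le> 0" if "x \<in> \<Omega>" for x
    using that marg_pos[OF that] pmf_nonneg[OF that] marg_le_1[of S x]
    by (cases "p x = 0") (auto intro!: mult_nonneg_nonpos)
  then show ?thesis by (simp add: entropy_fun_eq_sum[OF assms] sum_nonpos)
qed

lemma sum_consistent_le:
  assumes y: "y \<in> \<Omega>" and y': "y' \<in> \<Omega>"
  shows "(\<Sum>x\<in>{x\<in>\<Omega>. p x > 0}. if restrict y A = restrict x A \<and> restrict y' B = restrict x B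
            then p x * p y * p y' / (marg (A \<union> B) x * marg (A \<inter> B) x) else 0)
       \<le> (if restrict y (A \<inter> B) = restrict y' (A \<inter> B) then p y * p y' / marg (A \<inter> B) y else 0)"
    (is "?L \<le> ?R")
proof -
  define F where "F = {x\<in>\<Omega>. p x > 0 \<and> restrict y A = restrict x A \<and> restrict y' B = restrict x B}"
  have L: "?L = (\<Sum>x\<in>F. p x * p y * p y' / (marg (A \<union> B) x * marg (A \<inter> B) x))"
    unfolding F_def using finite_outcomes by (simp add: sum.inter_filter[symmetric] conj_assoc)
  show ?thesis
  proof (cases "F = {}")
    case True then show ?thesis using L pmf_nonneg[OF y] pmf_nonneg[OF y'] marg_nonneg by simp
  next
    case False
    then obtain x0 where x0: "x0 \<in> \<Omega>" "p x0 > 0" and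
      eqA: "restrict y A = restrict x0 A" and eqB: "restrict y' B = restrict x0 B"
      by (auto simp: F_def)
    have agree: "restrict y (A \<inter> B) = restrict y' (A \<inter> B)"
      using restrict_eq_subset[OF eqA, of "A \<inter> B"] restrict_eq_subset[OF eqB, of "A \<inter> B"] by auto
    have F_Un: "restrict x (A \<union> B) = restrict x0 (A \<union> B)" if "x \<in> F" for x
      using that eqA eqB by (auto simp: F_def intro!: restrict_eq_Un)
    have F_Int: "marg (A \<inter> B) x = marg (A \<inter> B) y" if "x \<in> F" for x
    proof (rule marg_cong)
      from that have "restrict x A = restrict y A" by (simp add: F_def)
      then show "restrict x (A \<inter> B) = restrict y (A \<inter> B)" by (rule restrict_eq_subset) auto
    qed
    define c where "c = p y * p y' / (marg (A \<union> B) x0 * marg (A \<inter> B) y)"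
    have "?L = (\<Sum>x\<in>F. p x) * c"
      unfolding L c_def sum_distrib_right by (intro sum.cong) (auto simp: F_Int marg_cong[OF F_Un])
    also have "\<dots> \<le> marg (A \<union> B) x0 * c"
    proof (rule mult_right_mono)
      show "c \<ge> 0" unfolding c_def using pmf_nonneg[OF y] pmf_nonneg[OF y'] marg_nonneg by auto
      show "sum p F \<le> marg (A \<union> B) x0"
        unfolding marg_eq_sum using F_Un finite_outcomes pmf_nonneg
        by (intro sum_mono2) (auto simp: F_def)
    qed
    also have "\<dots> = p y * p y' / marg (A \<inter> B) y"
      unfolding c_def using marg_pos[OF x0, of "A \<union> B"] by simp
    finally show ?thesis using agree by simp
  qed
qed

lemma sum_marg_ratio_le_1:
  "(\<Sum>x\<in>{x\<in>\<Omega>. p x > 0}. p x * (marg A x * marg B x / (marg (A \<union> B) x * marg (A \<inter> B) x))) \<le> 1"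
proof -
  let ?P = "{x\<in>\<Omega>. p x > 0}"
  let ?G = "\<lambda>x y y'. if restrict y A = restrict x A \<and> restrict y' B = restrict x B
            then p x * p y * p y' / (marg (A \<union> B) x * marg (A \<inter> B) x) else 0"
  have expand: "p x * (marg A x * marg B x / (marg (A \<union> B) x * marg (A \<inter> B) x))
      = (\<Sum>y\<in>\<Omega>. \<Sum>y'\<in>\<Omega>. ?G x y y')" for x
  proof -
    have "marg A x * marg B x = (\<Sum>y\<in>\<Omega>. \<Sum>y'\<in>\<Omega>. (if restrict y A = restrict x A then p y else 0) *
        (if restrict y' B = restrict x B then p y' else 0))"
      unfolding marg_eq_sum_if[of A] marg_eq_sum_if[of B] by (rule sum_product)
    then have "p x * (marg A x * marg B x / (marg (A \<union> B) x * marg (A \<inter> B) x))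
      = p x / (marg (A \<union> B) x * marg (A \<inter> B) x) * (\<Sum>y\<in>\<Omega>. \<Sum>y'\<in>\<Omega>.
          (if restrict y A = restrict x A then p y else 0) * (if restrict y' B = restrict x B then p y' else 0))"
      by simp
    then show ?thesis
      by (simp add: sum_distrib_left) (intro sum.cong refl, auto)
  qed
  have "(\<Sum>x\<in>?P. p x * (marg A x * marg B x / (marg (A \<union> B) x * marg (A \<inter> B) x)))
      = (\<Sum>y\<in>\<Omega>. \<Sum>y'\<in>\<Omega>. \<Sum>x\<in>?P. ?G x y y')"
    unfolding expand by (subst sum.swap) (simp add: sum.swap[of _ ?P])
  also have "\<dots> \<le> (\<Sum>y\<in>\<Omega>. \<Sum>y'\<in>\<Omega>.
      if restrict y (A \<inter> B) = restrict y' (A \<inter> B) then p y * p y' / marg (A \<inter> B) y else 0)"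
    by (intro sum_mono sum_consistent_le)
  also have "\<dots> = (\<Sum>y\<in>\<Omega>. p y / marg (A \<inter> B) y * marg (A \<inter> B) y)"
    by (simp add: marg_eq_sum_if[of "A \<inter> B"] sum_distrib_left eq_commute if_distrib cong: if_cong)
  also have "\<dots> = (\<Sum>y\<in>\<Omega>. p y)"
    using marg_pos pmf_nonneg by (intro sum.cong) (auto simp: less_le)
  finally show ?thesis using sum_pmf by simp
qed

lemma entropy_fun_submodular:
  assumes "A \<subseteq> V" "B \<subseteq> V"
  shows "entropy_fun V p (A \<union> B) + entropy_fun V p (A \<inter> B) \<le> entropy_fun V p A + entropy_fun V p B"
proof -
  let ?P = "{x\<in>\<Omega>. p x > 0}"
  let ?r = "\<lambda>x. marg A x * marg B x / (marg (A \<union> B) x * marg (A \<inter> B) x)"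
  let ?d = "\<lambda>x. log 2 (marg A x) + log 2 (marg B x) - log 2 (marg (A \<union> B) x) - log 2 (marg (A \<inter> B) x)"
  have "entropy_fun V p (A \<union> B) + entropy_fun V p (A \<inter> B) - entropy_fun V p A - entropy_fun V p B
      = (\<Sum>x\<in>\<Omega>. p x * ?d x)"
    using assms by (simp add: entropy_fun_eq_sum le_infI1 sum_subtractf sum.distrib algebra_simps)
  also have "\<dots> = (\<Sum>x\<in>?P. p x * ?d x)"
    using finite_outcomes pmf_nonneg by (intro sum.mono_neutral_right) (auto simp: less_le)
  also have "\<dots> \<le> (\<Sum>x\<in>?P. p x * ((?r x - 1) / ln 2))"
    using marg_pos by (intro sum_mono mult_left_mono log2_ratio_le) auto
  also have "\<dots> = ((\<Sum>x\<in>?P. p x * ?r x) - 1) / ln 2"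
    by (simp add: sum_pmf_pos sum_divide_distrib[symmetric] right_diff_distrib sum_subtractf)
  also have "\<dots> \<le> 0"
    using sum_marg_ratio_le_1 by (simp add: divide_nonpos_pos)
  finally show ?thesis by simp
qed

end

lemma is_partition_subset: "is_partition Q X \<Longrightarrow> C \<in> Q \<Longrightarrow> C \<subseteq> X"
  by (auto simp: is_partition_def)

lemma is_partition_finite: "finite X \<Longrightarrow> is_partition Q X \<Longrightarrow> finite Q"
  by (rule finite_subset[of Q "Pow X"]) (auto simp: is_partition_def)

lemma sum_partition:
  assumes "finite X" "is_partition Q X" shows "(\<Sum>C\<in>Q. sum r C) = sum r X"
proof -
  have "sum r (\<Union>Q) = (\<Sum>C\<in>Q. sum r C)"
    using assms by (subst sum.Union_disjoint) (auto simp: is_partition_def intro: finite_subset)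
  then show ?thesis using assms by (simp add: is_partition_def)
qed

lemma finite_partitions: "finite X \<Longrightarrow> finite {Q. is_partition Q X}"
  by (rule finite_subset[of _ "Pow (Pow X)"]) (auto simp: is_partition_def)

lemma is_partition_singleton: "X \<noteq> {} \<Longrightarrow> is_partition {X} X"
  by (simp add: is_partition_def)

lemma partition_exists: "\<exists>Q. is_partition Q X"
  by (cases "X = {}") (auto simp: is_partition_def intro: is_partition_singleton)

lemma is_partition_disjoint_Union:
  assumes P: "is_partition P V" and "S \<subseteq> P" "B \<in> P - S"
  shows "B \<inter> \<Union>S = {}"
proof -
  have "B \<inter> C = {}" if "C \<in> S" for C
  proof -
    have "B \<in> P" "C \<in> P" "B \<noteq> C" using assms that by auto
    then show ?thesis using P unfolding is_partition_def by blast
  qed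
  then show ?thesis by blast
qed

lemma is_partition_replace_blocks:
  assumes P: "is_partition P V" and "S \<subseteq> P" and Q: "is_partition Q (\<Union>S)"
  shows "is_partition ((P - S) \<union> Q) V" and "(P - S) \<inter> Q = {}"
proof -
  have disj: "B \<inter> \<Union>S = {}" if "B \<in> P - S" for B
    using is_partition_disjoint_Union[OF P \<open>S \<subseteq> P\<close> that] .
  show "(P - S) \<inter> Q = {}"
  proof (rule ccontr)
    assume "(P - S) \<inter> Q \<noteq> {}"
    then obtain B where "B \<in> P - S" "B \<in> Q" by blast
    then have "B \<subseteq> \<Union>S" "B \<inter> \<Union>S = {}" "B \<noteq> {}"
      using disj is_partition_subset[OF Q] Q by (auto simp: is_partition_def)
    then show False by blast
  qed
  show "is_partition ((P - S) \<union> Q) V"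
    unfolding is_partition_def
  proof (intro conjI ballI impI)
    show "\<Union>(P - S \<union> Q) = V" using P Q \<open>S \<subseteq> P\<close> by (auto simp: is_partition_def)
    show "C \<noteq> {}" if "C \<in> P - S \<union> Q" for C using P Q that by (auto simp: is_partition_def)
    have PQ: "C \<inter> D = {}" if "C \<in> P - S" "D \<in> Q" for C D
      using disj[OF that(1)] is_partition_subset[OF Q that(2)] by blast
    have PP: "C \<inter> D = {}" if "C \<in> P" "D \<in> P" "C \<noteq> D" for C D
      using P that unfolding is_partition_def by blast
    have QQ: "C \<inter> D = {}" if "C \<in> Q" "D \<in> Q" "C \<noteq> D" for C D
      using Q that unfolding is_partition_def by blast
    show "C \<inter> D = {}" if "C \<in> P - S \<union> Q" "D \<in> P - S \<union> Q" "C \<noteq> D" for C D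
      using that PQ[of C D] PQ[of D C] PP[of C D] QQ[of C D] by (auto simp: Int_commute)
  qed
qed

lemma dilworth_le: "finite X \<Longrightarrow> is_partition Q X \<Longrightarrow> dilworth H V a X \<le> (\<Sum>C\<in>Q. f_alpha H V a C)"
  unfolding dilworth_def by (rule Min_le) (auto simp: finite_partitions)

lemma dilworth_attained:
  assumes "finite X"
  obtains Q where "is_partition Q X" "dilworth H V a X = (\<Sum>C\<in>Q. f_alpha H V a C)"
proof -
  have "dilworth H V a X \<in> (\<lambda>P. \<Sum>C\<in>P. f_alpha H V a C) ` {P. is_partition P X}"
    unfolding dilworth_def using assms partition_exists[of X]
    by (intro Min_in) (auto simp: finite_partitions)
  then show ?thesis using that by auto
qed

lemma dilworth_le_singleton: "finite X \<Longrightarrow> X \<noteq> {} \<Longrightarrow> dilworth H V a X \<le> f_alpha H V a X"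
  using dilworth_le[OF _ is_partition_singleton] by fastforce

lemma dilworth_le_replace_blocks:
  assumes "finite V" "is_partition P V" "S \<subseteq> P" "is_partition Q (\<Union>S)"
  shows "dilworth H V a V \<le> (\<Sum>C\<in>P - S. f_alpha H V a C) + (\<Sum>C\<in>Q. f_alpha H V a C)"
proof -
  have "finite P" using assms is_partition_finite by blast
  moreover have "finite Q"
    using assms is_partition_finite[of "\<Union>S" Q] is_partition_subset[of P V]
    by (meson Sup_le_iff finite_subset subsetD)
  moreover have "dilworth H V a V \<le> (\<Sum>C\<in>(P - S) \<union> Q. f_alpha H V a C)"
    by (rule dilworth_le[OF \<open>finite V\<close> is_partition_replace_blocks(1)[OF assms(2-4)]])
  ultimately show ?thesis
    using is_partition_replace_blocks(2)[OF assms(2-4)] by (simp add: sum.union_disjoint)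
qed

lemma f_alpha_eq: "C \<noteq> {} \<Longrightarrow> C \<subseteq> V \<Longrightarrow> f_alpha H V a C = a - H V + H C"
  by (simp add: f_alpha_def condH_def Un_absorb2 Diff_partition)

definition direct_sum_set :: "'i set set \<Rightarrow> ('i set \<Rightarrow> ('i \<Rightarrow> real) set) \<Rightarrow> ('i \<Rightarrow> real) set" where
  "direct_sum_set P S = {direct_sum P rC | rC. \<forall>C\<in>P. rC C \<in> S C}"

context
  fixes P :: "'i set set" and V :: "'i set"
  assumes P: "is_partition P V"
begin

lemma direct_sum_apply: "C \<in> P \<Longrightarrow> i \<in> C \<Longrightarrow> direct_sum P rC i = rC C i"
proof -
  assume C: "C \<in> P" "i \<in> C"
  have "(THE C. C \<in> P \<and> i \<in> C) = C"
    by (rule the_equality) (use P C in \<open>auto simp: is_partition_def\<close>)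
  then show ?thesis using C by (auto simp: direct_sum_def)
qed

lemma direct_sum_extensional: "direct_sum P rC \<in> extensional V"
  using P by (auto simp: direct_sum_def is_partition_def extensional_def)

lemma direct_sum_restrict: "r \<in> extensional V \<Longrightarrow> direct_sum P (restrict r) = r"
proof
  fix i assume r: "r \<in> extensional V"
  show "direct_sum P (restrict r) i = r i"
  proof (cases "i \<in> V")
    case True
    then obtain C where "C \<in> P" "i \<in> C" using P by (auto simp: is_partition_def)
    then show ?thesis by (simp add: direct_sum_apply)
  next
    case False
    then show ?thesis using r direct_sum_extensional by (auto simp: extensional_def)
  qed
qed

lemma sum_direct_sum:
  assumes "finite V" "Y \<subseteq> V"
  shows "sum (direct_sum P rC) Y = (\<Sum>C\<in>P. sum (rC C) (Y \<inter> C))"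
proof -
  have "sum (direct_sum P rC) Y = sum (direct_sum P rC) (\<Union>C\<in>P. Y \<inter> C)"
    using P assms(2) by (auto simp: is_partition_def intro!: arg_cong[where f = "sum _"])
  also have "\<dots> = (\<Sum>C\<in>P. sum (direct_sum P rC) (Y \<inter> C))"
    using P assms is_partition_finite[OF _ P]
    by (intro sum.UNION_disjoint) (auto simp: is_partition_def disjoint_iff intro: finite_subset)
  also have "\<dots> = (\<Sum>C\<in>P. sum (rC C) (Y \<inter> C))"
    by (intro sum.cong refl) (simp add: direct_sum_apply)
  finally show ?thesis .
qed

lemma weighted_sq_direct_sum:
  "finite V \<Longrightarrow> weighted_sq w V (direct_sum P rC) = (\<Sum>C\<in>P. weighted_sq w C (rC C))"
  unfolding weighted_sq_def sum_partition[OF _ P, symmetric]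
  by (intro sum.cong refl) (simp add: direct_sum_apply)

lemma direct_sum_in_QK_vectors_iff:
  "direct_sum P rC \<in> QK_vectors K V \<longleftrightarrow> (\<forall>C\<in>P. rC C \<in> QK_vectors K C)"
  using P unfolding QK_vectors_def is_partition_def by (auto simp: direct_sum_apply)

lemma direct_sum_set_Int_QK_vectors:
  "direct_sum_set P S \<inter> QK_vectors K V = direct_sum_set P (\<lambda>C. S C \<inter> QK_vectors K C)"
  unfolding direct_sum_set_def by (auto simp: direct_sum_in_QK_vectors_iff)

lemma is_minimizer_direct_sum_set:
  assumes "finite V"
  shows "is_minimizer (weighted_sq w V) (direct_sum_set P S) r \<longleftrightarrow>
     (\<exists>rC. (\<forall>C\<in>P. is_minimizer (weighted_sq w C) (S C) (rC C)) \<and> r = direct_sum P rC)"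
proof
  have fP: "finite P" using is_partition_finite[OF assms P] .
  assume min: "is_minimizer (weighted_sq w V) (direct_sum_set P S) r"
  then obtain rC where rC: "\<forall>C\<in>P. rC C \<in> S C" and r: "r = direct_sum P rC"
    by (auto simp: is_minimizer_def direct_sum_set_def)
  have "weighted_sq w C0 (rC C0) \<le> weighted_sq w C0 s" if C0: "C0 \<in> P" and s: "s \<in> S C0" for C0 s
  proof -
    let ?others = "\<Sum>C\<in>P - {C0}. weighted_sq w C (rC C)"
    have "direct_sum P (rC(C0 := s)) \<in> direct_sum_set P S"
      using rC s unfolding direct_sum_set_def by force
    then have "weighted_sq w V r \<le> weighted_sq w V (direct_sum P (rC(C0 := s)))"
      using min by (simp add: is_minimizer_def)
    moreover have "weighted_sq w V (direct_sum P (rC(C0 := s))) = weighted_sq w C0 s + ?others"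
      using sum.remove[OF fP C0, of "\<lambda>C. weighted_sq w C ((rC(C0 := s)) C)"]
      by (simp add: weighted_sq_direct_sum[OF assms])
    moreover have "weighted_sq w V r = weighted_sq w C0 (rC C0) + ?others"
      using sum.remove[OF fP C0, of "\<lambda>C. weighted_sq w C (rC C)"]
      by (simp add: r weighted_sq_direct_sum[OF assms])
    ultimately show ?thesis by simp
  qed
  then show "\<exists>rC. (\<forall>C\<in>P. is_minimizer (weighted_sq w C) (S C) (rC C)) \<and> r = direct_sum P rC"
    using rC r by (auto simp: is_minimizer_def)
next
  assume "\<exists>rC. (\<forall>C\<in>P. is_minimizer (weighted_sq w C) (S C) (rC C)) \<and> r = direct_sum P rC"
  then obtain rC where min: "\<forall>C\<in>P. is_minimizer (weighted_sq w C) (S C) (rC C)"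
    and r: "r = direct_sum P rC" by blast
  have "weighted_sq w V r \<le> weighted_sq w V (direct_sum P tC)" if "\<forall>C\<in>P. tC C \<in> S C" for tC
    unfolding r weighted_sq_direct_sum[OF assms]
    by (rule sum_mono) (use min that in \<open>auto simp: is_minimizer_def\<close>)
  moreover have "r \<in> direct_sum_set P S"
    using min r by (auto simp: is_minimizer_def direct_sum_set_def)
  ultimately show "is_minimizer (weighted_sq w V) (direct_sum_set P S) r"
    by (auto simp: is_minimizer_def direct_sum_set_def)
qed

end

lemma in_CO_region_iff:
  assumes "finite V"
  shows "r \<in> CO_region H V \<and> sum r V = a \<longleftrightarrow>
    r \<in> extensional V \<and> sum r V = a \<and> (\<forall>Y. Y \<subseteq> V \<longrightarrow> Y \<noteq> {} \<longrightarrow> sum r Y \<le> f_alpha H V a Y)"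
proof -
  have complement: "condH H (V - Y) Y \<le> sum r (V - Y) \<longleftrightarrow> sum r Y \<le> f_alpha H V a Y"
    if "sum r V = a" "Y \<subseteq> V" "Y \<noteq> {}" for Y
    using that sum.subset_diff[OF \<open>Y \<subseteq> V\<close> assms, of r]
    by (auto simp: f_alpha_def condH_def Un_commute)
  have "(\<forall>X. X \<subset> V \<longrightarrow> condH H X (V - X) \<le> sum r X) \<longleftrightarrow>
      (\<forall>Y. Y \<subseteq> V \<longrightarrow> Y \<noteq> {} \<longrightarrow> condH H (V - Y) Y \<le> sum r (V - Y))"
  proof (intro iffI allI impI)
    fix Y assume "\<forall>X. X \<subset> V \<longrightarrow> condH H X (V - X) \<le> sum r X" "Y \<subseteq> V" "Y \<noteq> {}"
    moreover have "V - Y \<subset> V" "V - (V - Y) = Y" using \<open>Y \<subseteq> V\<close> \<open>Y \<noteq> {}\<close> by auto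
    ultimately show "condH H (V - Y) Y \<le> sum r (V - Y)" by metis
  next
    fix X assume "\<forall>Y. Y \<subseteq> V \<longrightarrow> Y \<noteq> {} \<longrightarrow> condH H (V - Y) Y \<le> sum r (V - Y)" "X \<subset> V"
    moreover have "V - X \<subseteq> V" "V - X \<noteq> {}" "V - (V - X) = X" using \<open>X \<subset> V\<close> by auto
    ultimately show "condH H X (V - X) \<le> sum r X" by metis
  qed
  then show ?thesis using complement unfolding CO_region_def by auto
qed

lemma sum_le_dilworth:
  assumes "finite V" and le_f: "\<forall>Y. Y \<subseteq> V \<longrightarrow> Y \<noteq> {} \<longrightarrow> sum r Y \<le> f_alpha H V a Y"
    and "X \<subseteq> V"
  shows "sum r X \<le> dilworth H V a X"
proof -
  have "finite X" using assms finite_subset by blast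
  then obtain Q where Q: "is_partition Q X" and opt: "dilworth H V a X = (\<Sum>C\<in>Q. f_alpha H V a C)"
    by (rule dilworth_attained)
  have "sum r X = (\<Sum>C\<in>Q. sum r C)" by (rule sum_partition[OF \<open>finite X\<close> Q, symmetric])
  also have "\<dots> \<le> (\<Sum>C\<in>Q. f_alpha H V a C)"
    using le_f Q \<open>X \<subseteq> V\<close> by (intro sum_mono) (auto simp: is_partition_def)
  finally show ?thesis using opt by simp
qed

lemma sum_f_alpha_partition:
  fixes H :: "'i set \<Rightarrow> real"
  assumes "is_partition Q V"
  shows "(\<Sum>C\<in>Q. f_alpha H V a C) = card Q * (a - H V) + (\<Sum>C\<in>Q. H C)"
proof -
  have "(\<Sum>C\<in>Q. f_alpha H V a C) = (\<Sum>C\<in>Q. (a - H V) + H C)"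
    using assms by (intro sum.cong refl f_alpha_eq) (auto simp: is_partition_def)
  then show ?thesis by (simp add: sum.distrib)
qed

lemma CO_region_nonempty:
  assumes "finite V" and nonneg: "\<And>A. A \<subseteq> V \<Longrightarrow> H A \<ge> 0"
  shows "CO_region H V \<noteq> {}"
proof -
  have "condH H X (V - X) \<le> sum (restrict (\<lambda>_. H V) V) X" if X: "X \<subset> V" for X
  proof (cases "X = {}")
    case False
    then have "1 \<le> card X" using X assms(1) by (meson card_0_eq finite_subset less_one not_less psubset_imp_subset)
    then have "H V \<le> card X * H V" using nonneg[of V] by (simp add: mult_le_cancel_right1)
    moreover have "sum (restrict (\<lambda>_. H V) V) X = card X * H V"
    proof -
      have "sum (restrict (\<lambda>_. H V) V) X = (\<Sum>x\<in>X. H V)"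
        using X by (intro sum.cong) auto
      then show ?thesis by simp
    qed
    ultimately show ?thesis using X nonneg[of "V - X"] by (simp add: condH_def Un_absorb1 Un_Diff_cancel)
  qed (simp add: condH_def)
  then have "restrict (\<lambda>_. H V) V \<in> CO_region H V" by (simp add: CO_region_def)
  then show ?thesis by blast
qed

lemma dilworth_R_CO:
  assumes "finite V" "V \<noteq> {}" and nonneg: "\<And>A. A \<subseteq> V \<Longrightarrow> H A \<ge> 0"
  shows "dilworth H V (R_CO H V) V = R_CO H V"
proof (rule antisym)
  have "f_alpha H V a V = a" for a using assms(2) by (simp add: f_alpha_def condH_def)
  then show "dilworth H V (R_CO H V) V \<le> R_CO H V"
    using dilworth_le_singleton[OF assms(1,2), of H V "R_CO H V"] by simp
next
  let ?\<alpha> = "R_CO H V"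
  obtain Q where Q: "is_partition Q V" and opt: "dilworth H V ?\<alpha> V = (\<Sum>C\<in>Q. f_alpha H V ?\<alpha> C)"
    using dilworth_attained[OF assms(1)] by blast
  define k where "k = real (card Q)"
  define g where "g a = k * (a - H V) + (\<Sum>C\<in>Q. H C) - a" for a
  have region: "CO_region H V \<noteq> {}"
    using CO_region_nonempty[of V H] assms(1) nonneg by blast
  have k: "k \<ge> 1"
    using Q assms(1,2) is_partition_finite[OF _ Q]
    by (auto simp: k_def is_partition_def Suc_le_eq card_gt_0_iff)
  have g_region: "g (sum r V) \<ge> 0" if "r \<in> CO_region H V" for r
  proof -
    have "sum r V = (\<Sum>C\<in>Q. sum r C)" by (rule sum_partition[OF assms(1) Q, symmetric])
    also have "\<dots> \<le> (\<Sum>C\<in>Q. f_alpha H V (sum r V) C)"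
      using that in_CO_region_iff[OF assms(1), of r H "sum r V"] Q
      by (intro sum_mono) (auto simp: is_partition_def)
    finally show ?thesis using sum_f_alpha_partition[OF Q] by (simp add: g_def k_def)
  qed
  have "g ?\<alpha> \<ge> 0"
  proof (cases "k = 1")
    case True
    then show ?thesis using g_region region by (auto simp: g_def)
  next
    case False
    have "(H V * k - (\<Sum>C\<in>Q. H C)) / (k - 1) \<le> ?\<alpha>"
      unfolding R_CO_def
    proof (rule cINF_greatest[OF region])
      fix r assume "r \<in> CO_region H V"
      then show "(H V * k - (\<Sum>C\<in>Q. H C)) / (k - 1) \<le> sum r V"
        using g_region k False by (auto simp: g_def field_simps)
    qed
    then show ?thesis using k False by (simp add: g_def field_simps)
  qed
  then show "?\<alpha> \<le> dilworth H V ?\<alpha> V"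
    using opt sum_f_alpha_partition[OF Q] by (simp add: g_def k_def)
qed

locale optimal_partition =
  fixes H :: "'i set \<Rightarrow> real" and V :: "'i set" and \<alpha> :: real and P :: "'i set set"
  assumes finite: "finite V"
    and submodular: "\<And>A B. A \<subseteq> V \<Longrightarrow> B \<subseteq> V \<Longrightarrow> H (A \<union> B) + H (A \<inter> B) \<le> H A + H B"
    and partition: "is_partition P V"
    and optimal: "(\<Sum>C\<in>P. f_alpha H V \<alpha> C) = dilworth H V \<alpha> V"
begin

abbreviation "f \<equiv> f_alpha H V \<alpha>"
abbreviation "D \<equiv> dilworth H V \<alpha>"

lemma finite_blocks: "finite P"
  using is_partition_finite[OF finite partition] .

lemma block_subset: "C \<in> P \<Longrightarrow> C \<subseteq> V"
  using is_partition_subset[OF partition] .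

lemma dilworth_block:
  assumes C: "C \<in> P"
  shows "D C = f C"
proof (rule antisym)
  have "finite C" using finite block_subset[OF C] finite_subset by blast
  moreover have "C \<noteq> {}" using C partition by (auto simp: is_partition_def)
  ultimately
  show "D C \<le> f C" by (rule dilworth_le_singleton)
  obtain Q where Q: "is_partition Q C" and opt: "D C = (\<Sum>B\<in>Q. f B)"
    using dilworth_attained[OF \<open>finite C\<close>] by blast
  have "D V \<le> (\<Sum>B\<in>P - {C}. f B) + D C"
    using dilworth_le_replace_blocks[OF finite partition, of "{C}" Q] C Q opt by simp
  moreover have "D V = (\<Sum>B\<in>P - {C}. f B) + f C"
    using optimal sum.remove[OF finite_blocks C, of f] by simp
  ultimately show "f C \<le> D C" by simp
qed

lemma f_submodular:
  assumes "A \<subseteq> V" "B \<subseteq> V" "A \<inter> B \<noteq> {}"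
  shows "f (A \<union> B) + f (A \<inter> B) \<le> f A + f B"
proof -
  have "A \<noteq> {}" "B \<noteq> {}" "A \<union> B \<noteq> {}" using assms(3) by auto
  then show ?thesis using submodular[OF assms(1,2)] assms by (simp add: f_alpha_eq le_infI1)
qed

lemma f_Un_blocks_le:
  assumes "finite S" "S \<subseteq> P" "Y \<subseteq> V" "\<forall>C\<in>S. Y \<inter> C \<noteq> {}"
  shows "f (Y \<union> \<Union>S) + (\<Sum>C\<in>S. f (Y \<inter> C)) \<le> f Y + (\<Sum>C\<in>S. f C)"
  using assms
proof (induction S rule: finite_induct)
  case (insert C S)
  let ?A = "Y \<union> \<Union>S"
  have "C \<inter> \<Union>S = {}"
    using is_partition_disjoint_Union[OF partition, of S C] insert by auto
  then have "?A \<inter> C = Y \<inter> C" by blast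
  moreover have "?A \<subseteq> V" "C \<subseteq> V"
    using insert block_subset by auto
  ultimately have "f (?A \<union> C) + f (Y \<inter> C) \<le> f ?A + f C"
    using f_submodular[of ?A C] insert.prems by auto
  moreover have "Y \<union> \<Union>(insert C S) = ?A \<union> C" by auto
  ultimately show ?case using insert by simp
qed simp

text \<open>Merging all blocks met by Y into one block cannot decrease the sum of f below D V.\<close>
lemma sum_f_blocks_le:
  assumes Y: "Y \<subseteq> V" "Y \<noteq> {}"
  shows "(\<Sum>C\<in>{C\<in>P. Y \<inter> C \<noteq> {}}. f (Y \<inter> C)) \<le> f Y"
proof -
  define S where "S = {C\<in>P. Y \<inter> C \<noteq> {}}"
  have S: "finite S" "S \<subseteq> P" using finite_blocks by (auto simp: S_def)
  have "Y \<subseteq> \<Union>S"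
  proof
    fix y assume "y \<in> Y"
    moreover obtain C where "C \<in> P" "y \<in> C"
      using \<open>y \<in> Y\<close> Y partition unfolding is_partition_def by blast
    ultimately show "y \<in> \<Union>S" by (auto simp: S_def)
  qed
  then have YU: "Y \<union> \<Union>S = \<Union>S" by blast
  then have "\<Union>S \<noteq> {}" using Y by auto
  then have "D V \<le> (\<Sum>C\<in>P - S. f C) + f (\<Union>S)"
    using dilworth_le_replace_blocks[OF finite partition S(2) is_partition_singleton] by simp
  moreover have "D V = (\<Sum>C\<in>S. f C) + (\<Sum>C\<in>P - S. f C)"
    using optimal sum.subset_diff[OF S(2) finite_blocks, of f] by simp
  moreover have "f (\<Union>S) + (\<Sum>C\<in>S. f (Y \<inter> C)) \<le> f Y + (\<Sum>C\<in>S. f C)"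
    using f_Un_blocks_le[OF S Y(1)] YU by (simp add: S_def)
  ultimately show ?thesis by (simp add: S_def)
qed

end

context optimal_partition
begin

lemma restrict_in_CO_subcore:
  assumes \<alpha>: "\<alpha> = R_CO H V" and r: "r \<in> extensional V" "sum r V = D V"
    and le_f: "\<forall>Y. Y \<subseteq> V \<longrightarrow> Y \<noteq> {} \<longrightarrow> sum r Y \<le> f Y" and C: "C \<in> P"
  shows "restrict r C \<in> CO_subcore H V C"
proof -
  have le_D: "sum r X \<le> D X" if "X \<subseteq> V" for X
    by (rule sum_le_dilworth[OF finite le_f that])
  have "(\<Sum>B\<in>P. D B - sum r B) = 0"
    using r optimal sum_partition[OF finite partition, of r]
    by (simp add: sum_subtractf dilworth_block cong: sum.cong)
  moreover have "\<forall>B\<in>P. D B - sum r B \<ge> 0"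
    using le_D block_subset by auto
  ultimately have "D B = sum r B" if "B \<in> P" for B
    using sum_nonneg_eq_0_iff[OF finite_blocks, of "\<lambda>B. D B - sum r B"] that by auto
  moreover have "sum (restrict r C) X = sum r X" if "X \<subseteq> C" for X
    using that by (intro sum.cong) auto
  moreover have "X \<subseteq> V" if "X \<subseteq> C" for X
    using that block_subset[OF C] by blast
  ultimately show ?thesis
    using C le_D \<alpha> by (auto simp: CO_subcore_def)
qed

lemma direct_sum_in_CO_core:
  assumes \<alpha>: "\<alpha> = R_CO H V" "D V = \<alpha>" and rC: "\<forall>C\<in>P. rC C \<in> CO_subcore H V C"
  shows "direct_sum P rC \<in> CO_core H V"
proof -
  let ?r = "direct_sum P rC"
  have sub: "sum (rC C) X \<le> D X" "sum (rC C) C = D C" if "C \<in> P" "X \<subseteq> C" for C X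
    using rC that \<alpha>(1) by (auto simp: CO_subcore_def)
  have "sum ?r V = (\<Sum>C\<in>P. D C)"
    using sum_direct_sum[OF partition finite, of V rC] block_subset sub(2)
    by (auto intro!: sum.cong simp: Int_absorb1)
  then have sum_V: "sum ?r V = \<alpha>"
    using optimal \<alpha>(2) by (simp add: dilworth_block cong: sum.cong)
  have "sum ?r Y \<le> f Y" if Y: "Y \<subseteq> V" "Y \<noteq> {}" for Y
  proof -
    have "sum ?r Y = (\<Sum>C\<in>P. sum (rC C) (Y \<inter> C))"
      by (rule sum_direct_sum[OF partition finite Y(1)])
    also have "\<dots> \<le> (\<Sum>C\<in>P. if Y \<inter> C \<noteq> {} then f (Y \<inter> C) else 0)"
    proof (rule sum_mono)
      fix C assume C: "C \<in> P"
      show "sum (rC C) (Y \<inter> C) \<le> (if Y \<inter> C \<noteq> {} then f (Y \<inter> C) else 0)"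
      proof (cases "Y \<inter> C = {}")
        case False
        have "finite (Y \<inter> C)" using Y finite finite_subset by blast
        then have "D (Y \<inter> C) \<le> f (Y \<inter> C)" using False by (rule dilworth_le_singleton)
        then show ?thesis using sub(1)[OF C, of "Y \<inter> C"] False by simp
      qed simp
    qed
    also have "\<dots> = (\<Sum>C\<in>{C\<in>P. Y \<inter> C \<noteq> {}}. f (Y \<inter> C))"
      by (rule sum.inter_filter[OF finite_blocks, symmetric])
    also have "\<dots> \<le> f Y" by (rule sum_f_blocks_le[OF Y])
    finally show ?thesis .
  qed
  then show ?thesis
    using in_CO_region_iff[OF finite, of ?r H \<alpha>] sum_V \<alpha>(1) direct_sum_extensional[OF partition]
    by (simp add: CO_core_def)
qed

lemma CO_core_eq_direct_sum_set:
  assumes "\<alpha> = R_CO H V" "D V = \<alpha>"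
  shows "CO_core H V = direct_sum_set P (CO_subcore H V)"
proof
  show "direct_sum_set P (CO_subcore H V) \<subseteq> CO_core H V"
    using direct_sum_in_CO_core[OF assms] by (auto simp: direct_sum_set_def)
  show "CO_core H V \<subseteq> direct_sum_set P (CO_subcore H V)"
  proof
    fix r assume "r \<in> CO_core H V"
    then have r: "r \<in> extensional V" "sum r V = D V" "\<forall>Y. Y \<subseteq> V \<longrightarrow> Y \<noteq> {} \<longrightarrow> sum r Y \<le> f Y"
      using in_CO_region_iff[OF finite, of r H \<alpha>] assms by (auto simp: CO_core_def)
    then have "direct_sum P (restrict r) = r"
      by (simp add: direct_sum_restrict[OF partition])
    then show "r \<in> direct_sum_set P (CO_subcore H V)"
      using restrict_in_CO_subcore[OF assms(1) r] unfolding direct_sum_set_def by force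
  qed
qed

end

theorem theorem3:
  fixes V :: "'i set" and p :: "('i \<Rightarrow> 'a::finite) \<Rightarrow> real"
    and w :: "'i \<Rightarrow> real" and P :: "'i set set" and K :: nat
  defines "H \<equiv> entropy_fun V p"
  assumes "finite V" and "card V > 1"
    and "is_joint_pmf V p"
    and "\<forall>i\<in>V. w i > 0"
    and "fundamental_partition H V P" and "card P \<ge> 2"
    and "K = card P - 1"
  shows
    "(\<forall>r. is_minimizer (weighted_sq w V) (CO_core H V) r \<longleftrightarrow>
        (\<exists>rC. (\<forall>C\<in>P. is_minimizer (weighted_sq w C) (CO_subcore H V C) (rC C))
              \<and> r = direct_sum P rC))
   \<and> (\<forall>r. is_minimizer (weighted_sq w V) (CO_core H V \<inter> QK_vectors K V) r \<longleftrightarrow>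
        (\<exists>rC. (\<forall>C\<in>P. is_minimizer (weighted_sq w C) (CO_subcore H V C \<inter> QK_vectors K C) (rC C))
              \<and> r = direct_sum P rC))"
proof -
  interpret source: joint_source V p
    using \<open>finite V\<close> \<open>is_joint_pmf V p\<close> by unfold_locales
  have nonneg: "\<And>A. A \<subseteq> V \<Longrightarrow> H A \<ge> 0"
    unfolding H_def by (rule source.entropy_fun_nonneg)
  have "V \<noteq> {}" using \<open>card V > 1\<close> by auto
  interpret optimal_partition H V "R_CO H V" P
    using \<open>finite V\<close> \<open>fundamental_partition H V P\<close> source.entropy_fun_submodular
    by unfold_locales (auto simp: H_def fundamental_partition_def)
  have core: "CO_core H V = direct_sum_set P (CO_subcore H V)"
    using dilworth_R_CO[OF \<open>finite V\<close> \<open>V \<noteq> {}\<close> nonneg] by (intro CO_core_eq_direct_sum_set) auto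
  show ?thesis
    unfolding core direct_sum_set_Int_QK_vectors[OF partition]
    by (simp add: is_minimizer_direct_sum_set[OF partition \<open>finite V\<close>])
qed

end
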